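(* Let $A$ be a $K$-algebra and $n\ge1$. (1) The algebra $\mathbb{S}_n\otimes_K A$ is prime iff $A$ is prime. (2) An ideal $\mathfrak p$ of $A$ is prime iff the ideal $\mathbb{S}_n\otimes\mathfrak p$ of $\mathbb{S}_n\otimes A$ is prime.
   Context: $K$ is a field. $\mathbb{S}_n$ is the $K$-algebra generated by $x_1,\dots,x_n,y_1,\dots,y_n$ subject to the defining relations $y_ix_i=1$ for all $i$, and $[x_i,y_j]=[x_i,x_j]=[y_i,y_j]=0$ for all $i\ne j$. *)

theory Defs
  imports Main
begin

definition ideal_in :: "'r set \<Rightarrow> ('r \<Rightarrow> 'r \<Rightarrow> 'r) \<Rightarrow> ('r \<Rightarrow> 'r) \<Rightarrow> 'r \<Rightarrow> ('r \<Rightarrow> 'r \<Rightarrow> 'r) \<Rightarrow> 'r set \<Rightarrow> bool" where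
  "ideal_in R add neg z mult I \<longleftrightarrow>
     I \<subseteq> R \<and> z \<in> I \<and> (\<forall>a\<in>I. \<forall>b\<in>I. add a b \<in> I) \<and> (\<forall>a\<in>I. neg a \<in> I) \<and>
     (\<forall>r\<in>R. \<forall>a\<in>I. mult r a \<in> I \<and> mult a r \<in> I)"

definition prime_ideal_in :: "'r set \<Rightarrow> ('r \<Rightarrow> 'r \<Rightarrow> 'r) \<Rightarrow> ('r \<Rightarrow> 'r) \<Rightarrow> 'r \<Rightarrow> ('r \<Rightarrow> 'r \<Rightarrow> 'r) \<Rightarrow> 'r set \<Rightarrow> bool" where
  "prime_ideal_in R add neg z mult P \<longleftrightarrow>
     ideal_in R add neg z mult P \<and> P \<noteq> R \<and>
     (\<forall>I J. ideal_in R add neg z mult I \<and> ideal_in R add neg z mult J \<and>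
            (\<forall>a\<in>I. \<forall>b\<in>J. mult a b \<in> P) \<longrightarrow> I \<subseteq> P \<or> J \<subseteq> P)"

definition prime_ring_in :: "'r set \<Rightarrow> ('r \<Rightarrow> 'r \<Rightarrow> 'r) \<Rightarrow> ('r \<Rightarrow> 'r) \<Rightarrow> 'r \<Rightarrow> ('r \<Rightarrow> 'r \<Rightarrow> 'r) \<Rightarrow> bool" where
  "prime_ring_in R add neg z mult \<longleftrightarrow> prime_ideal_in R add neg z mult {z}"

definition K_algebra :: "('k::field \<Rightarrow> 'a::ring_1 \<Rightarrow> 'a) \<Rightarrow> bool" where
  "K_algebra sc \<longleftrightarrow>
     (\<forall>a. sc 1 a = a) \<and> (\<forall>k l a. sc (k * l) a = sc k (sc l a)) \<and>
     (\<forall>k l a. sc (k + l) a = sc k a + sc l a) \<and> (\<forall>k a b. sc k (a + b) = sc k a + sc k b) \<and>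
     (\<forall>k a b. sc k (a * b) = sc k a * b \<and> sc k (a * b) = a * sc k b)"

text \<open>Monomials x^\<alpha> y^\<beta> of S_n, \<alpha>,\<beta> \<in> \<nat>^n, represented as pairs of functions
  nat \<Rightarrow> nat vanishing outside {0..<n}.  They form a K-basis of S_n = S_1^{\<otimes>n},
  and in S_1 one has x^a y^b x^c y^d = x^(a+c-b) y^d if b \<le> c, else x^a y^(b-c+d).\<close>
type_synonym monom = "(nat \<Rightarrow> nat) \<times> (nat \<Rightarrow> nat)"

definition valid_monom :: "nat \<Rightarrow> monom \<Rightarrow> bool" where
  "valid_monom n m \<longleftrightarrow> (\<forall>i\<ge>n. fst m i = 0 \<and> snd m i = 0)"

definition monom_mult :: "monom \<Rightarrow> monom \<Rightarrow> monom" where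
  "monom_mult u v =
     ((\<lambda>i. if snd u i \<le> fst v i then fst u i + fst v i - snd u i else fst u i),
      (\<lambda>i. if snd u i \<le> fst v i then snd v i else snd u i - fst v i + snd v i))"

text \<open>S_n \<otimes>_K A: finitely supported A-valued coefficient functions on the monomial basis.\<close>
definition Sn_tensor :: "nat \<Rightarrow> (monom \<Rightarrow> 'a::ring_1) set" where
  "Sn_tensor n = {f. finite {m. f m \<noteq> 0} \<and> (\<forall>m. f m \<noteq> 0 \<longrightarrow> valid_monom n m)}"

definition st_add :: "(monom \<Rightarrow> 'a::ring_1) \<Rightarrow> (monom \<Rightarrow> 'a) \<Rightarrow> monom \<Rightarrow> 'a" where
  "st_add f g = (\<lambda>m. f m + g m)"

definition st_neg :: "(monom \<Rightarrow> 'a::ring_1) \<Rightarrow> monom \<Rightarrow> 'a" where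
  "st_neg f = (\<lambda>m. - f m)"

definition st_zero :: "monom \<Rightarrow> 'a::ring_1" where
  "st_zero = (\<lambda>m. 0)"

text \<open>(\<Sum> a_u u)(\<Sum> b_v v) = \<Sum> (a_u b_v) (u v), since A commutes with S_n in S_n \<otimes> A.\<close>
definition st_mult :: "(monom \<Rightarrow> 'a::ring_1) \<Rightarrow> (monom \<Rightarrow> 'a) \<Rightarrow> monom \<Rightarrow> 'a" where
  "st_mult f g = (\<lambda>m. \<Sum>uv \<in> {u. f u \<noteq> 0} \<times> {v. g v \<noteq> 0}.
                        if monom_mult (fst uv) (snd uv) = m then f (fst uv) * g (snd uv) else 0)"

definition Sn_tensor_ideal :: "nat \<Rightarrow> 'a::ring_1 set \<Rightarrow> (monom \<Rightarrow> 'a) set" where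
  "Sn_tensor_ideal n p = {f \<in> Sn_tensor n. \<forall>m. f m \<in> p}"

end

theory Submission
  imports Defs
begin

text \<open>Let \<open>p\<close> be a prime ideal of \<open>A\<close> and \<open>f, g \<notin> S\<^sub>n \<otimes> p\<close>. Among the monomials
  \<open>x\<^sup>\<alpha> y\<^sup>\<beta>\<close> whose coefficient in \<open>f\<close> lies outside \<open>p\<close> pick one with \<open>|\<alpha>|\<close> minimal and then
  \<open>|\<beta>|\<close> maximal; then modulo \<open>p\<close> the element \<open>y\<^sup>\<alpha> f x\<^sup>\<beta>\<close> of the ideal generated by \<open>f\<close> has
  constant term \<open>f\<^sub>\<alpha>\<^sub>\<beta> \<notin> p\<close> and no other monomial free of \<open>x\<close>. Symmetrically \<open>g\<close> yields an
  element with constant term outside \<open>p\<close> and no other monomial free of \<open>y\<close>. Since a product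
  of monomials is \<open>1\<close> only if the left factor is free of \<open>x\<close> and the right one free of \<open>y\<close>,
  after inserting a scalar \<open>r\<close> with \<open>f\<^sub>\<alpha>\<^sub>\<beta> r g\<^sub>\<gamma>\<^sub>\<delta> \<notin> p\<close> the constant term of the product is
  \<open>f\<^sub>\<alpha>\<^sub>\<beta> r g\<^sub>\<gamma>\<^sub>\<delta>\<close> modulo \<open>p\<close>. The converse is formal, and part (1) is the case \<open>p = 0\<close>.\<close>

abbreviation ring_ideal :: "'a::ring_1 set \<Rightarrow> bool" where
  "ring_ideal p \<equiv> ideal_in UNIV (+) uminus 0 (*) p"

lemma ring_ideal_sum:
  assumes "ring_ideal p" and "\<And>x. x \<in> S \<Longrightarrow> h x \<in> p"
  shows "sum h S \<in> p"
proof (cases "finite S")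
  case True
  then show ?thesis using assms(2)
    by (induction S rule: finite_induct) (use assms(1) in \<open>auto simp: ideal_in_def\<close>)
qed (use assms(1) in \<open>simp add: ideal_in_def\<close>)

lemma ring_ideal_sum_mem_iff:
  assumes p: "ring_ideal p" and "finite S" "x \<in> S" and rest: "\<And>y. y \<in> S - {x} \<Longrightarrow> h y \<in> p"
  shows "sum h S \<in> p \<longleftrightarrow> h x \<in> p"
proof -
  have split: "sum h S = h x + sum h (S - {x})"
    using assms(2,3) by (rule sum.remove)
  have "sum h (S - {x}) \<in> p"
    using ring_ideal_sum[OF p rest] .
  moreover have "h x = sum h S + - sum h (S - {x})"
    using split by simp
  ultimately show ?thesis
    using p split unfolding ideal_in_def by metis
qed

text \<open>The ideals \<open>I = {x. x A b \<subseteq> \<pp>}\<close> and \<open>J = {y. I A y \<subseteq> \<pp>}\<close> satisfy \<open>I J \<subseteq> \<pp>\<close>,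
  \<open>a \<in> I\<close> and \<open>b \<in> J\<close>.\<close>
lemma prime_ideal_in_obtain_mult_not_mem:
  fixes p :: "'a::ring_1 set"
  assumes P: "prime_ideal_in UNIV (+) uminus 0 (*) p" and "a \<notin> p" and "b \<notin> p"
  obtains r where "a * r * b \<notin> p"
proof (rule ccontr)
  assume "\<not> thesis"
  with that have H: "\<forall>r. a * r * b \<in> p" by blast
  have "ring_ideal p" using P by (simp add: prime_ideal_in_def)
  then have p0: "0 \<in> p" and padd: "\<And>x y. x \<in> p \<Longrightarrow> y \<in> p \<Longrightarrow> x + y \<in> p"
    and pneg: "\<And>x. x \<in> p \<Longrightarrow> - x \<in> p"
    and pl: "\<And>r x. x \<in> p \<Longrightarrow> r * x \<in> p" and pr: "\<And>r x. x \<in> p \<Longrightarrow> x * r \<in> p"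
    by (auto simp: ideal_in_def)
  define I where "I = {x. \<forall>r. x * r * b \<in> p}"
  define J where "J = {y. \<forall>x\<in>I. \<forall>r. x * r * y \<in> p}"
  have "ring_ideal I" unfolding ideal_in_def
  proof (intro conjI ballI)
    show "0 \<in> I" using p0 by (simp add: I_def)
  next
    fix x y assume "x \<in> I" "y \<in> I"
    then show "x + y \<in> I" using padd by (simp add: I_def distrib_right)
  next
    fix x assume "x \<in> I"
    then show "- x \<in> I" using pneg by (simp add: I_def)
  next
    fix s x assume "x \<in> I"
    then show "s * x \<in> I" "x * s \<in> I"
      using pl by (simp_all add: I_def mult.assoc) (metis mult.assoc)
  qed simp
  moreover have "ring_ideal J" unfolding ideal_in_def
  proof (intro conjI ballI)
    show "0 \<in> J" using p0 by (simp add: J_def)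
  next
    fix x y assume "x \<in> J" "y \<in> J"
    then show "x + y \<in> J" using padd by (simp add: J_def distrib_left)
  next
    fix x assume "x \<in> J"
    then show "- x \<in> J" using pneg by (simp add: J_def)
  next
    fix s y assume "y \<in> J"
    then show "s * y \<in> J" "y * s \<in> J"
      using pr by (simp_all add: J_def) (metis mult.assoc)+
  qed simp
  moreover have "\<forall>x\<in>I. \<forall>y\<in>J. x * y \<in> p"
    by (auto simp: J_def) (metis mult.right_neutral)
  ultimately have "I \<subseteq> p \<or> J \<subseteq> p"
    using P unfolding prime_ideal_in_def by blast
  moreover have "a \<in> I" "b \<in> J" using H by (simp_all add: I_def J_def)
  ultimately show False using assms(2,3) by blast
qed

section \<open>Monomials\<close>

definition monom_one :: monom where
  "monom_one = (\<lambda>_. 0, \<lambda>_. 0)"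

lemma valid_monom_one: "valid_monom n monom_one"
  by (simp add: valid_monom_def monom_one_def)

lemma valid_monom_mult: "valid_monom n u \<Longrightarrow> valid_monom n v \<Longrightarrow> valid_monom n (monom_mult u v)"
  by (auto simp: valid_monom_def monom_mult_def)

lemma monom_mult_one_right [simp]: "monom_mult u monom_one = u"
  by (cases u) (auto simp: monom_mult_def monom_one_def fun_eq_iff)

lemma monom_mult_eq_one:
  assumes "monom_mult u v = monom_one"
  shows "fst u = (\<lambda>_. 0)" and "snd v = (\<lambda>_. 0)"
proof -
  have prod_eq_0: "fst (monom_mult u v) i = 0 \<and> snd (monom_mult u v) i = 0" for i
    using assms by (simp add: monom_one_def)
  have "fst u i = 0 \<and> snd v i = 0" for i
    using prod_eq_0[of i] by (auto simp: monom_mult_def split: if_splits)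
  then show "fst u = (\<lambda>_. 0)" "snd v = (\<lambda>_. 0)" by auto
qed

text \<open>\<open>monom_sandwich \<alpha> \<beta> v\<close> is \<open>y\<^sup>\<alpha> v x\<^sup>\<beta>\<close>.\<close>
definition monom_sandwich :: "(nat \<Rightarrow> nat) \<Rightarrow> (nat \<Rightarrow> nat) \<Rightarrow> monom \<Rightarrow> monom" where
  "monom_sandwich \<alpha> \<beta> v = monom_mult (monom_mult (\<lambda>_. 0, \<alpha>) v) (\<beta>, \<lambda>_. 0)"

lemma monom_sandwich_self: "monom_sandwich \<alpha> \<beta> (\<alpha>, \<beta>) = monom_one"
  by (auto simp: monom_sandwich_def monom_mult_def monom_one_def fun_eq_iff)

lemma fst_monom_sandwich_eq_0:
  "fst (monom_sandwich \<alpha> \<beta> (a, b)) i = 0 \<Longrightarrow> a i \<le> \<alpha> i \<and> (a i = \<alpha> i \<longrightarrow> \<beta> i \<le> b i)"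
  by (auto simp: monom_sandwich_def monom_mult_def split: if_splits)

lemma snd_monom_sandwich_eq_0:
  "snd (monom_sandwich \<alpha> \<beta> (a, b)) i = 0 \<Longrightarrow> b i \<le> \<beta> i \<and> (b i = \<beta> i \<longrightarrow> \<alpha> i \<le> a i)"
  by (auto simp: monom_sandwich_def monom_mult_def split: if_splits)

lemma eq_if_le_and_sum_le:
  fixes a b :: "nat \<Rightarrow> nat"
  assumes "\<And>i. a i \<le> b i" and "\<And>i. n \<le> i \<Longrightarrow> a i = b i" and "(\<Sum>i<n. b i) \<le> (\<Sum>i<n. a i)"
  shows "a = b"
proof (rule ccontr)
  assume "a \<noteq> b"
  then obtain j where j: "a j \<noteq> b j" by auto
  with assms(2) have "j < n" by (meson not_le)
  moreover have "a j < b j" using j assms(1) le_neq_implies_less by blast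
  ultimately have "(\<Sum>i<n. a i) < (\<Sum>i<n. b i)"
    by (intro sum_strict_mono_ex1) (use assms(1) in auto)
  with assms(3) show False by simp
qed

text \<open>Choose \<open>(\<alpha>, \<beta>) \<in> Q\<close> with \<open>|\<alpha>|\<close> minimal and then \<open>|\<beta>|\<close> maximal.\<close>
lemma exists_lex_extremal_monom:
  assumes fin: "finite Q" and "Q \<noteq> {}" and valid: "\<And>m. m \<in> Q \<Longrightarrow> valid_monom n m"
  obtains \<alpha> \<beta> where "(\<alpha>, \<beta>) \<in> Q"
    and "\<And>a b. (a, b) \<in> Q \<Longrightarrow> \<forall>i. a i \<le> \<alpha> i \<and> (a i = \<alpha> i \<longrightarrow> \<beta> i \<le> b i) \<Longrightarrow> (a, b) = (\<alpha>, \<beta>)"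
proof -
  define deg where "deg b = (\<Sum>i<n. b i)" for b :: "nat \<Rightarrow> nat"
  obtain k where "k \<in> Q" using assms(2) by blast
  then obtain m0 where m0: "m0 \<in> Q" and min: "\<And>m. m \<in> Q \<Longrightarrow> deg (fst m0) \<le> deg (fst m)"
    using ex_has_least_nat[where P = "\<lambda>m. m \<in> Q" and m = "\<lambda>m. deg (fst m)"] by blast
  define \<alpha> where "\<alpha> = fst m0"
  define B where "B = {b. (\<alpha>, b) \<in> Q}"
  have "B \<subseteq> snd ` Q" by (force simp: B_def)
  then have finB: "finite (deg ` B)" by (intro finite_imageI finite_subset[OF _ finite_imageI[OF fin]])
  have "snd m0 \<in> B" using m0 by (simp add: B_def \<alpha>_def)
  then have "Max (deg ` B) \<in> deg ` B" using Max_in[OF finB] by blast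
  then obtain \<beta> where "\<beta> \<in> B" and \<beta>: "deg \<beta> = Max (deg ` B)" by (metis imageE)
  then have "(\<alpha>, \<beta>) \<in> Q" by (simp add: B_def)
  then show thesis
  proof (rule that)
    fix a b assume ab: "(a, b) \<in> Q" and le: "\<forall>i. a i \<le> \<alpha> i \<and> (a i = \<alpha> i \<longrightarrow> \<beta> i \<le> b i)"
    have outside: "a i = \<alpha> i" "b i = \<beta> i" if "n \<le> i" for i
      using valid[OF ab] valid[OF \<open>(\<alpha>, \<beta>) \<in> Q\<close>] that by (simp_all add: valid_monom_def)
    have "deg \<alpha> \<le> deg a" using min[OF ab] by (simp add: \<alpha>_def)
    then have "a = \<alpha>"
      using le outside(1) by (intro eq_if_le_and_sum_le[of a \<alpha> n]) (simp_all add: deg_def)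
    with ab have "b \<in> B" by (simp add: B_def)
    then have "deg b \<le> deg \<beta>" using Max_ge[OF finB] \<beta> by simp
    then have "\<beta> = b"
      using le outside(2) \<open>a = \<alpha>\<close> by (intro eq_if_le_and_sum_le[of \<beta> b n]) (simp_all add: deg_def)
    with \<open>a = \<alpha>\<close> show "(a, b) = (\<alpha>, \<beta>)" by simp
  qed
qed

lemma exists_monom_sandwich_isolating_fst:
  assumes "finite Q" and "Q \<noteq> {}" and "\<And>m. m \<in> Q \<Longrightarrow> valid_monom n m"
  obtains \<alpha> \<beta> where "(\<alpha>, \<beta>) \<in> Q"
    and "\<And>v. v \<in> Q \<Longrightarrow> fst (monom_sandwich \<alpha> \<beta> v) = (\<lambda>_. 0) \<Longrightarrow> v = (\<alpha>, \<beta>)"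
proof -
  obtain \<alpha> \<beta> where "(\<alpha>, \<beta>) \<in> Q"
    and "\<And>a b. (a, b) \<in> Q \<Longrightarrow> \<forall>i. a i \<le> \<alpha> i \<and> (a i = \<alpha> i \<longrightarrow> \<beta> i \<le> b i) \<Longrightarrow> (a, b) = (\<alpha>, \<beta>)"
    using exists_lex_extremal_monom[OF assms] by blast
  then show thesis
    using that fst_monom_sandwich_eq_0[of \<alpha> \<beta>] by (metis prod.exhaust)
qed

lemma exists_monom_sandwich_isolating_snd:
  assumes "finite Q" and "Q \<noteq> {}" and valid: "\<And>m. m \<in> Q \<Longrightarrow> valid_monom n m"
  obtains \<alpha> \<beta> where "(\<alpha>, \<beta>) \<in> Q"
    and "\<And>v. v \<in> Q \<Longrightarrow> snd (monom_sandwich \<alpha> \<beta> v) = (\<lambda>_. 0) \<Longrightarrow> v = (\<alpha>, \<beta>)"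
proof -
  have "finite (prod.swap ` Q)" "prod.swap ` Q \<noteq> {}" using assms(1,2) by simp_all
  moreover have "valid_monom n m" if "m \<in> prod.swap ` Q" for m
    using that valid by (auto simp: valid_monom_def)
  ultimately obtain \<beta> \<alpha> where mem: "(\<beta>, \<alpha>) \<in> prod.swap ` Q"
    and lex: "\<And>b a. (b, a) \<in> prod.swap ` Q \<Longrightarrow> \<forall>i. b i \<le> \<beta> i \<and> (b i = \<beta> i \<longrightarrow> \<alpha> i \<le> a i)
      \<Longrightarrow> (b, a) = (\<beta>, \<alpha>)"
    using exists_lex_extremal_monom by metis
  show thesis
  proof (rule that)
    show "(\<alpha>, \<beta>) \<in> Q" using mem by (auto simp: image_iff)
  next
    fix v assume "v \<in> Q" and v0: "snd (monom_sandwich \<alpha> \<beta> v) = (\<lambda>_. 0)"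
    obtain a b where v: "v = (a, b)" by fastforce
    have "(b, a) \<in> prod.swap ` Q" using \<open>v \<in> Q\<close> v by force
    moreover have "\<forall>i. b i \<le> \<beta> i \<and> (b i = \<beta> i \<longrightarrow> \<alpha> i \<le> a i)"
      using snd_monom_sandwich_eq_0[of \<alpha> \<beta> a b] v0 v by simp
    ultimately show "v = (\<alpha>, \<beta>)" using lex v by blast
  qed
qed

section \<open>The ring \<open>S\<^sub>n \<otimes> A\<close>\<close>

lemma Sn_tensor_finite_support: "f \<in> Sn_tensor n \<Longrightarrow> finite {m. f m \<noteq> 0}"
  unfolding Sn_tensor_def by blast

lemma Sn_tensor_valid_monom: "f \<in> Sn_tensor n \<Longrightarrow> f m \<noteq> 0 \<Longrightarrow> valid_monom n m"
  unfolding Sn_tensor_def by blast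

lemma st_zero_in_Sn_tensor: "st_zero \<in> Sn_tensor n"
  by (simp add: Sn_tensor_def st_zero_def)

lemma st_add_in_Sn_tensor:
  assumes "f \<in> Sn_tensor n" and "g \<in> Sn_tensor n"
  shows "st_add f g \<in> Sn_tensor n"
proof -
  have "{m. st_add f g m \<noteq> 0} \<subseteq> {m. f m \<noteq> 0} \<union> {m. g m \<noteq> 0}"
    by (auto simp: st_add_def)
  then show ?thesis
    using assms unfolding Sn_tensor_def by (auto simp: st_add_def intro: finite_subset)
qed

lemma st_neg_in_Sn_tensor: "f \<in> Sn_tensor n \<Longrightarrow> st_neg f \<in> Sn_tensor n"
  unfolding Sn_tensor_def st_neg_def by auto

lemma st_mult_eq_sum_superset:
  assumes "finite X" "finite Y" "{u. f u \<noteq> 0} \<subseteq> X" "{v. g v \<noteq> 0} \<subseteq> Y"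
  shows "st_mult f g m =
    (\<Sum>(u, v)\<in>X \<times> Y. if monom_mult u v = m then f u * g v else (0::'a::ring_1))"
  unfolding st_mult_def case_prod_beta
  by (rule sum.mono_neutral_left) (use assms in auto)

lemma st_mult_support_subset:
  "{m. st_mult f g m \<noteq> (0::'a::ring_1)} \<subseteq> (\<lambda>(u, v). monom_mult u v) ` ({u. f u \<noteq> 0} \<times> {v. g v \<noteq> 0})"
proof (rule subsetI, rule ccontr)
  fix m assume "m \<in> {m. st_mult f g m \<noteq> 0}"
    and "m \<notin> (\<lambda>(u, v). monom_mult u v) ` ({u. f u \<noteq> 0} \<times> {v. g v \<noteq> 0})"
  moreover from this(2) have "st_mult f g m = 0"
    unfolding st_mult_def by (intro sum.neutral) force
  ultimately show False by simp
qed

lemma st_mult_in_Sn_tensor: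
  assumes "f \<in> Sn_tensor n" and "g \<in> Sn_tensor n"
  shows "st_mult f g \<in> (Sn_tensor n :: (monom \<Rightarrow> 'a::ring_1) set)"
proof -
  have "finite {m. st_mult f g m \<noteq> (0::'a)}"
    using Sn_tensor_finite_support[OF assms(1)] Sn_tensor_finite_support[OF assms(2)]
    by (intro finite_subset[OF st_mult_support_subset]) auto
  moreover have "valid_monom n m" if "st_mult f g m \<noteq> 0" for m
  proof -
    have "m \<in> (\<lambda>(u, v). monom_mult u v) ` ({u. f u \<noteq> 0} \<times> {v. g v \<noteq> 0})"
      using that st_mult_support_subset[of f g] by blast
    then obtain u v where "f u \<noteq> 0" "g v \<noteq> 0" "m = monom_mult u v" by auto
    then show ?thesis
      using valid_monom_mult Sn_tensor_valid_monom assms by metis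
  qed
  ultimately show ?thesis by (auto simp: Sn_tensor_def)
qed

definition st_monom :: "monom \<Rightarrow> 'a::ring_1 \<Rightarrow> monom \<Rightarrow> 'a" where
  "st_monom u c = (\<lambda>m. if m = u then c else 0)"

lemma st_monom_in_Sn_tensor: "valid_monom n u \<Longrightarrow> st_monom u c \<in> Sn_tensor n"
  unfolding Sn_tensor_def st_monom_def by (auto intro: finite_subset[of _ "{u}"])

lemma st_mult_st_monom_left:
  assumes "finite X" and "{v. f v \<noteq> 0} \<subseteq> X"
  shows "st_mult (st_monom u 1) f m = (\<Sum>v\<in>X. if monom_mult u v = m then f v else (0::'a::ring_1))"
proof -
  have "st_mult (st_monom u 1) f m
      = (\<Sum>(u', v)\<in>{u} \<times> X. if monom_mult u' v = m then st_monom u 1 u' * f v else 0)"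
    by (rule st_mult_eq_sum_superset) (use assms in \<open>auto simp: st_monom_def\<close>)
  also have "\<dots> = (\<Sum>v\<in>X. if monom_mult u v = m then f v else 0)"
    by (simp add: sum.cartesian_product[symmetric] st_monom_def cong: if_cong)
  finally show ?thesis .
qed

lemma st_mult_st_monom_right:
  assumes "finite X" and "{v. f v \<noteq> 0} \<subseteq> X"
  shows "st_mult f (st_monom w c) m = (\<Sum>v\<in>X. if monom_mult v w = m then f v * c else (0::'a::ring_1))"
proof -
  have "st_mult f (st_monom w c) m
      = (\<Sum>(v, w')\<in>X \<times> {w}. if monom_mult v w' = m then f v * st_monom w c w' else 0)"
    by (rule st_mult_eq_sum_superset) (use assms in \<open>auto simp: st_monom_def\<close>)
  also have "\<dots> = (\<Sum>v\<in>X. if monom_mult v w = m then f v * c else 0)"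
    by (simp add: sum.cartesian_product[symmetric] st_monom_def cong: if_cong)
  finally show ?thesis .
qed

lemma st_mult_st_monom_one_right:
  assumes "f \<in> Sn_tensor n"
  shows "st_mult f (st_monom monom_one r) m = f m * (r::'a::ring_1)"
proof -
  have fin: "finite {v. f v \<noteq> 0}" using Sn_tensor_finite_support[OF assms] .
  then have "st_mult f (st_monom monom_one r) m = (\<Sum>v\<in>{v. f v \<noteq> 0}. if v = m then f v * r else 0)"
    by (simp add: st_mult_st_monom_right)
  also have "\<dots> = f m * r" using fin by simp
  finally show ?thesis .
qed

lemma st_mult_st_monom_both:
  assumes "finite X" and "{v. f v \<noteq> 0} \<subseteq> X"
  shows "st_mult (st_mult (st_monom u 1) f) (st_monom w 1) m
    = (\<Sum>v\<in>X. if monom_mult (monom_mult u v) w = m then f v else (0::'a::ring_1))"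
proof -
  define G where "G = st_mult (st_monom u 1) f"
  define T where "T = monom_mult u ` X"
  have G: "G v' = (\<Sum>v\<in>X. if monom_mult u v = v' then f v else 0)" for v'
    unfolding G_def using assms by (rule st_mult_st_monom_left)
  have "{v'. G v' \<noteq> 0} \<subseteq> T"
  proof
    fix v' assume "v' \<in> {v'. G v' \<noteq> 0}"
    then have "(\<Sum>v\<in>X. if monom_mult u v = v' then f v else 0) \<noteq> 0" using G by simp
    then have "\<exists>v\<in>X. (if monom_mult u v = v' then f v else 0) \<noteq> 0"
      by (rule contrapos_np) (intro sum.neutral, blast)
    then show "v' \<in> T" by (auto simp: T_def split: if_splits)
  qed
  then have "st_mult G (st_monom w 1) m = (\<Sum>v'\<in>T. if monom_mult v' w = m then G v' * 1 else 0)"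
    by (intro st_mult_st_monom_right) (use assms in \<open>simp add: T_def\<close>)
  also have "\<dots> = (\<Sum>v'\<in>T. \<Sum>v\<in>X. if v' = monom_mult u v \<and> monom_mult v' w = m then f v else 0)"
    by (rule sum.cong) (auto simp: G intro!: sum.cong)
  also have "\<dots> = (\<Sum>v\<in>X. \<Sum>v'\<in>T. if v' = monom_mult u v then (if monom_mult v' w = m then f v else 0) else 0)"
    by (subst sum.swap) (auto intro!: sum.cong)
  also have "\<dots> = (\<Sum>v\<in>X. if monom_mult (monom_mult u v) w = m then f v else 0)"
    by (rule sum.cong) (auto simp: T_def assms(1))
  finally show ?thesis unfolding G_def .
qed

definition st_sandwich :: "(nat \<Rightarrow> nat) \<Rightarrow> (nat \<Rightarrow> nat) \<Rightarrow> (monom \<Rightarrow> 'a::ring_1) \<Rightarrow> monom \<Rightarrow> 'a" where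
  "st_sandwich \<alpha> \<beta> f = st_mult (st_mult (st_monom (\<lambda>_. 0, \<alpha>) 1) f) (st_monom (\<beta>, \<lambda>_. 0) 1)"

lemma st_sandwich_coeff:
  assumes "finite X" and "{v. f v \<noteq> 0} \<subseteq> X"
  shows "st_sandwich \<alpha> \<beta> f m = (\<Sum>v\<in>X. if monom_sandwich \<alpha> \<beta> v = m then f v else 0)"
  unfolding st_sandwich_def monom_sandwich_def using assms by (rule st_mult_st_monom_both)

section \<open>Isolating a coefficient modulo an ideal\<close>

lemma st_sandwich_isolates:
  fixes f :: "monom \<Rightarrow> 'a::ring_1"
  assumes p: "ring_ideal p" and f: "f \<in> Sn_tensor n" and "monom_one \<in> M"
    and iso: "\<And>v. f v \<notin> p \<Longrightarrow> monom_sandwich \<alpha> \<beta> v \<in> M \<Longrightarrow> v = (\<alpha>, \<beta>)"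
  shows "st_sandwich \<alpha> \<beta> f monom_one \<in> p \<longleftrightarrow> f (\<alpha>, \<beta>) \<in> p"
    and "\<And>m. m \<in> M \<Longrightarrow> m \<noteq> monom_one \<Longrightarrow> st_sandwich \<alpha> \<beta> f m \<in> p"
proof -
  define X where "X = insert (\<alpha>, \<beta>) {v. f v \<noteq> 0}"
  have X: "finite X" "{v. f v \<noteq> 0} \<subseteq> X"
    using Sn_tensor_finite_support[OF f] by (auto simp: X_def)
  have p0: "0 \<in> p" using p by (simp add: ideal_in_def)
  have in_p: "f v \<in> p" if "monom_sandwich \<alpha> \<beta> v \<in> M" and "v \<noteq> (\<alpha>, \<beta>)" for v
    using iso that by blast
  have "(\<Sum>v\<in>X. if monom_sandwich \<alpha> \<beta> v = monom_one then f v else 0) \<in> p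
      \<longleftrightarrow> (if monom_sandwich \<alpha> \<beta> (\<alpha>, \<beta>) = monom_one then f (\<alpha>, \<beta>) else 0) \<in> p"
    by (rule ring_ideal_sum_mem_iff[OF p \<open>finite X\<close>])
      (use in_p \<open>monom_one \<in> M\<close> p0 in \<open>auto simp: X_def\<close>)
  then show "st_sandwich \<alpha> \<beta> f monom_one \<in> p \<longleftrightarrow> f (\<alpha>, \<beta>) \<in> p"
    by (simp add: st_sandwich_coeff[OF X] monom_sandwich_self)
  fix m assume "m \<in> M" and "m \<noteq> monom_one"
  then have "(\<Sum>v\<in>X. if monom_sandwich \<alpha> \<beta> v = m then f v else 0) \<in> p"
    using in_p p0 monom_sandwich_self[of \<alpha> \<beta>] by (intro ring_ideal_sum[OF p]) auto
  then show "st_sandwich \<alpha> \<beta> f m \<in> p"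
    by (simp add: st_sandwich_coeff[OF X])
qed

lemma Sn_tensor_coeffs_not_in_ideal:
  fixes f :: "monom \<Rightarrow> 'a::ring_1"
  assumes "ring_ideal p" and f: "f \<in> Sn_tensor n" and "f \<notin> Sn_tensor_ideal n p"
  shows "finite {m. f m \<notin> p}" and "{m. f m \<notin> p} \<noteq> {}"
    and "\<And>m. m \<in> {m. f m \<notin> p} \<Longrightarrow> valid_monom n m"
proof -
  have sub: "{m. f m \<notin> p} \<subseteq> {m. f m \<noteq> 0}"
    using assms(1) by (auto simp: ideal_in_def)
  then show "finite {m. f m \<notin> p}"
    using Sn_tensor_finite_support[OF f] by (rule finite_subset)
  show "{m. f m \<notin> p} \<noteq> {}" using assms(3) f by (auto simp: Sn_tensor_ideal_def)
  show "\<And>m. m \<in> {m. f m \<notin> p} \<Longrightarrow> valid_monom n m"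
    using sub Sn_tensor_valid_monom[OF f] by blast
qed

lemma exists_st_sandwich_isolating_fst:
  fixes f :: "monom \<Rightarrow> 'a::ring_1"
  assumes p: "ring_ideal p" and f: "f \<in> Sn_tensor n" and "f \<notin> Sn_tensor_ideal n p"
  obtains \<alpha> \<beta> where "valid_monom n (\<lambda>_. 0, \<alpha>)" and "valid_monom n (\<beta>, \<lambda>_. 0)"
    and "st_sandwich \<alpha> \<beta> f monom_one \<notin> p"
    and "\<And>m. fst m = (\<lambda>_. 0) \<Longrightarrow> m \<noteq> monom_one \<Longrightarrow> st_sandwich \<alpha> \<beta> f m \<in> p"
proof -
  obtain \<alpha> \<beta> where ab: "(\<alpha>, \<beta>) \<in> {m. f m \<notin> p}"
    and iso: "\<And>v. v \<in> {m. f m \<notin> p} \<Longrightarrow> fst (monom_sandwich \<alpha> \<beta> v) = (\<lambda>_. 0) \<Longrightarrow> v = (\<alpha>, \<beta>)"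
    using exists_monom_sandwich_isolating_fst[OF Sn_tensor_coeffs_not_in_ideal[OF assms]] by blast
  have "monom_one \<in> {m. fst m = (\<lambda>_. 0)}" by (simp add: monom_one_def)
  note isolated = st_sandwich_isolates[OF p f this, of \<alpha> \<beta>]
  show thesis
  proof (rule that)
    show "valid_monom n (\<lambda>_. 0, \<alpha>)" "valid_monom n (\<beta>, \<lambda>_. 0)"
      using Sn_tensor_coeffs_not_in_ideal(3)[OF assms ab] by (simp_all add: valid_monom_def)
  qed (use isolated iso ab in auto)
qed

lemma exists_st_sandwich_isolating_snd:
  fixes f :: "monom \<Rightarrow> 'a::ring_1"
  assumes p: "ring_ideal p" and f: "f \<in> Sn_tensor n" and "f \<notin> Sn_tensor_ideal n p"
  obtains \<alpha> \<beta> where "valid_monom n (\<lambda>_. 0, \<alpha>)" and "valid_monom n (\<beta>, \<lambda>_. 0)"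
    and "st_sandwich \<alpha> \<beta> f monom_one \<notin> p"
    and "\<And>m. snd m = (\<lambda>_. 0) \<Longrightarrow> m \<noteq> monom_one \<Longrightarrow> st_sandwich \<alpha> \<beta> f m \<in> p"
proof -
  obtain \<alpha> \<beta> where ab: "(\<alpha>, \<beta>) \<in> {m. f m \<notin> p}"
    and iso: "\<And>v. v \<in> {m. f m \<notin> p} \<Longrightarrow> snd (monom_sandwich \<alpha> \<beta> v) = (\<lambda>_. 0) \<Longrightarrow> v = (\<alpha>, \<beta>)"
    using exists_monom_sandwich_isolating_snd[OF Sn_tensor_coeffs_not_in_ideal[OF assms]] by blast
  have "monom_one \<in> {m. snd m = (\<lambda>_. 0)}" by (simp add: monom_one_def)
  note isolated = st_sandwich_isolates[OF p f this, of \<alpha> \<beta>]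
  show thesis
  proof (rule that)
    show "valid_monom n (\<lambda>_. 0, \<alpha>)" "valid_monom n (\<beta>, \<lambda>_. 0)"
      using Sn_tensor_coeffs_not_in_ideal(3)[OF assms ab] by (simp_all add: valid_monom_def)
  qed (use isolated iso ab in auto)
qed

text \<open>A product \<open>u v\<close> of monomials is \<open>1\<close> only if \<open>u\<close> is free of \<open>x\<close> and \<open>v\<close> free of \<open>y\<close>.\<close>
lemma st_mult_coeff_one_mem_iff:
  fixes F G :: "monom \<Rightarrow> 'a::ring_1"
  assumes p: "ring_ideal p" and "F \<in> Sn_tensor n" and "G \<in> Sn_tensor n"
    and F: "\<And>m. fst m = (\<lambda>_. 0) \<Longrightarrow> m \<noteq> monom_one \<Longrightarrow> F m \<in> p"
    and G: "\<And>m. snd m = (\<lambda>_. 0) \<Longrightarrow> m \<noteq> monom_one \<Longrightarrow> G m \<in> p"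
  shows "st_mult F G monom_one \<in> p \<longleftrightarrow> F monom_one * G monom_one \<in> p"
proof -
  define X where "X = insert monom_one {u. F u \<noteq> 0}"
  define Y where "Y = insert monom_one {v. G v \<noteq> 0}"
  have "finite X" "finite Y"
    using Sn_tensor_finite_support assms(2,3) by (auto simp: X_def Y_def)
  then have prod: "st_mult F G monom_one
      = (\<Sum>(u, v)\<in>X \<times> Y. if monom_mult u v = monom_one then F u * G v else 0)"
    by (rule st_mult_eq_sum_superset) (auto simp: X_def Y_def)
  have p0: "0 \<in> p" and pl: "\<And>r x. x \<in> p \<Longrightarrow> r * x \<in> p" and pr: "\<And>r x. x \<in> p \<Longrightarrow> x * r \<in> p"
    using p by (auto simp: ideal_in_def)
  have other: "F u * G v \<in> p" if "monom_mult u v = monom_one" and "(u, v) \<noteq> (monom_one, monom_one)" for u v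
  proof (cases "u = monom_one")
    case True
    then show ?thesis using that G[OF monom_mult_eq_one(2)[OF that(1)]] pl by auto
  next
    case False
    then show ?thesis using F[OF monom_mult_eq_one(1)[OF that(1)]] pr by auto
  qed
  have "(\<Sum>(u, v)\<in>X \<times> Y. if monom_mult u v = monom_one then F u * G v else 0) \<in> p
      \<longleftrightarrow> (case (monom_one, monom_one) of (u, v) \<Rightarrow> if monom_mult u v = monom_one then F u * G v else 0) \<in> p"
  proof (rule ring_ideal_sum_mem_iff[OF p])
    show "finite (X \<times> Y)" using \<open>finite X\<close> \<open>finite Y\<close> by simp
    show "(monom_one, monom_one) \<in> X \<times> Y" by (simp add: X_def Y_def)
  next
    fix uv assume "uv \<in> X \<times> Y - {(monom_one, monom_one)}"
    then obtain u v where "uv = (u, v)" and "(u, v) \<noteq> (monom_one, monom_one)" by (cases uv) auto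
    then show "(case uv of (u, v) \<Rightarrow> if monom_mult u v = monom_one then F u * G v else 0) \<in> p"
      using other p0 by simp
  qed
  then show ?thesis by (simp add: prod)
qed

lemma mem_Sn_tensor_ideal: "f \<in> Sn_tensor_ideal n K \<longleftrightarrow> f \<in> Sn_tensor n \<and> (\<forall>m. f m \<in> K)"
  unfolding Sn_tensor_ideal_def by blast

lemma ideal_in_Sn_tensor_ideal:
  fixes I :: "'a::ring_1 set"
  assumes I: "ring_ideal I"
  shows "ideal_in (Sn_tensor n) st_add st_neg st_zero st_mult (Sn_tensor_ideal n I)"
proof -
  have I0: "0 \<in> I" and Iadd: "\<And>a b. a \<in> I \<Longrightarrow> b \<in> I \<Longrightarrow> a + b \<in> I"
    and Ineg: "\<And>a. a \<in> I \<Longrightarrow> - a \<in> I"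
    and Il: "\<And>r a. a \<in> I \<Longrightarrow> r * a \<in> I" and Ir: "\<And>r a. a \<in> I \<Longrightarrow> a * r \<in> I"
    using I by (auto simp: ideal_in_def)
  show ?thesis unfolding ideal_in_def
  proof (intro conjI ballI)
    show "Sn_tensor_ideal n I \<subseteq> Sn_tensor n" by (auto simp: Sn_tensor_ideal_def)
    show "st_zero \<in> Sn_tensor_ideal n I"
      using st_zero_in_Sn_tensor I0 by (simp add: Sn_tensor_ideal_def st_zero_def)
  next
    fix f g assume "f \<in> Sn_tensor_ideal n I" "g \<in> Sn_tensor_ideal n I"
    then show "st_add f g \<in> Sn_tensor_ideal n I"
      using st_add_in_Sn_tensor Iadd unfolding mem_Sn_tensor_ideal st_add_def by blast
  next
    fix f assume "f \<in> Sn_tensor_ideal n I"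
    then show "st_neg f \<in> Sn_tensor_ideal n I"
      using st_neg_in_Sn_tensor Ineg unfolding mem_Sn_tensor_ideal st_neg_def by blast
  next
    fix r f :: "monom \<Rightarrow> 'a" assume r: "r \<in> Sn_tensor n" and f: "f \<in> Sn_tensor_ideal n I"
    then have "\<forall>m. f m \<in> I" unfolding mem_Sn_tensor_ideal by blast
    then have "st_mult r f m \<in> I" "st_mult f r m \<in> I" for m
      unfolding st_mult_def using I0 Il Ir by (auto intro!: ring_ideal_sum[OF I])
    moreover have "st_mult r f \<in> Sn_tensor n" "st_mult f r \<in> Sn_tensor n"
      using r f st_mult_in_Sn_tensor by (auto simp: Sn_tensor_ideal_def)
    ultimately show "st_mult r f \<in> Sn_tensor_ideal n I" "st_mult f r \<in> Sn_tensor_ideal n I"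
      unfolding mem_Sn_tensor_ideal by blast+
  qed
qed

lemma st_mult_in_Sn_tensor_ideal:
  fixes I J p :: "'a::ring_1 set"
  assumes p: "ring_ideal p" and IJ: "\<forall>a\<in>I. \<forall>b\<in>J. a * b \<in> p"
    and "f \<in> Sn_tensor_ideal n I" and "g \<in> Sn_tensor_ideal n J"
  shows "st_mult f g \<in> Sn_tensor_ideal n p"
proof -
  have "0 \<in> p" using p by (simp add: ideal_in_def)
  then have "st_mult f g m \<in> p" for m
    unfolding st_mult_def using assms(3,4) IJ
    by (intro ring_ideal_sum[OF p]) (auto simp: Sn_tensor_ideal_def)
  moreover have "st_mult f g \<in> Sn_tensor n"
    using assms(3,4) st_mult_in_Sn_tensor by (auto simp: Sn_tensor_ideal_def)
  ultimately show ?thesis by (simp add: Sn_tensor_ideal_def)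
qed

lemma st_monom_one_in_Sn_tensor_ideal_iff:
  assumes "0 \<in> K"
  shows "st_monom monom_one a \<in> Sn_tensor_ideal n K \<longleftrightarrow> a \<in> K"
proof
  assume "st_monom monom_one a \<in> Sn_tensor_ideal n K"
  then have "st_monom monom_one a monom_one \<in> K" unfolding mem_Sn_tensor_ideal by blast
  then show "a \<in> K" by (simp add: st_monom_def)
next
  assume "a \<in> K"
  then have "st_monom monom_one a m \<in> K" for m
    using assms by (simp add: st_monom_def)
  then show "st_monom monom_one a \<in> Sn_tensor_ideal n K"
    using st_monom_in_Sn_tensor[OF valid_monom_one] by (simp add: Sn_tensor_ideal_def)
qed

lemma Sn_tensor_ideal_subsetD:
  assumes "0 \<in> K" and "0 \<in> p" and "Sn_tensor_ideal n K \<subseteq> Sn_tensor_ideal n p"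
  shows "K \<subseteq> p"
  using assms st_monom_one_in_Sn_tensor_ideal_iff by blast

lemma Sn_tensor_ideal_eq_Sn_tensor_iff:
  "Sn_tensor_ideal n p = Sn_tensor n \<longleftrightarrow> p = (UNIV :: 'a::ring_1 set)"
proof
  assume "Sn_tensor_ideal n p = Sn_tensor n"
  then have "st_monom monom_one a \<in> Sn_tensor_ideal n p" for a :: 'a
    using st_monom_in_Sn_tensor[OF valid_monom_one] by blast
  then have "st_monom monom_one a monom_one \<in> p" for a :: 'a
    unfolding mem_Sn_tensor_ideal by blast
  then show "p = UNIV" by (auto simp: st_monom_def)
qed (auto simp: Sn_tensor_ideal_def)

lemma Sn_tensor_ideal_zero: "Sn_tensor_ideal n {0 :: 'a::ring_1} = {st_zero}"
  using st_zero_in_Sn_tensor by (auto simp: Sn_tensor_ideal_def st_zero_def fun_eq_iff)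

lemma st_sandwich_mem_ideal:
  assumes "ideal_in (Sn_tensor n) st_add st_neg st_zero st_mult I" and "f \<in> I"
    and "valid_monom n (\<lambda>_. 0, \<alpha>)" and "valid_monom n (\<beta>, \<lambda>_. 0)"
  shows "st_sandwich \<alpha> \<beta> f \<in> I"
  using assms st_monom_in_Sn_tensor unfolding ideal_in_def st_sandwich_def by blast

lemma prime_ideal_in_Sn_tensor_ideal:
  fixes p :: "'a::ring_1 set"
  assumes P: "prime_ideal_in UNIV (+) uminus 0 (*) p"
  shows "prime_ideal_in (Sn_tensor n) st_add st_neg st_zero st_mult (Sn_tensor_ideal n p)"
proof -
  have p: "ring_ideal p" and "p \<noteq> UNIV" using P by (simp_all add: prime_ideal_in_def)
  have prime: "I \<subseteq> Sn_tensor_ideal n p \<or> J \<subseteq> Sn_tensor_ideal n p"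
    if I: "ideal_in (Sn_tensor n) st_add st_neg st_zero st_mult I"
      and J: "ideal_in (Sn_tensor n) st_add st_neg st_zero st_mult J"
      and IJ: "\<forall>f\<in>I. \<forall>g\<in>J. st_mult f g \<in> Sn_tensor_ideal n p" for I J
  proof (rule ccontr)
    assume "\<not> ?thesis"
    then obtain f g where f: "f \<in> I" "f \<notin> Sn_tensor_ideal n p" and g: "g \<in> J" "g \<notin> Sn_tensor_ideal n p"
      by blast
    have I_sub: "I \<subseteq> Sn_tensor n" and J_sub: "J \<subseteq> Sn_tensor n"
      and I_mult: "\<And>r x. r \<in> Sn_tensor n \<Longrightarrow> x \<in> I \<Longrightarrow> st_mult x r \<in> I"
      using I J by (simp_all add: ideal_in_def)
    obtain \<alpha> \<beta> where ab: "valid_monom n (\<lambda>_. 0, \<alpha>)" "valid_monom n (\<beta>, \<lambda>_. 0)"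
      and f_one: "st_sandwich \<alpha> \<beta> f monom_one \<notin> p"
      and f_fst: "\<And>m. fst m = (\<lambda>_. 0) \<Longrightarrow> m \<noteq> monom_one \<Longrightarrow> st_sandwich \<alpha> \<beta> f m \<in> p"
      using exists_st_sandwich_isolating_fst[OF p _ f(2)] f(1) I_sub by blast
    obtain \<gamma> \<delta> where gd: "valid_monom n (\<lambda>_. 0, \<gamma>)" "valid_monom n (\<delta>, \<lambda>_. 0)"
      and g_one: "st_sandwich \<gamma> \<delta> g monom_one \<notin> p"
      and g_snd: "\<And>m. snd m = (\<lambda>_. 0) \<Longrightarrow> m \<noteq> monom_one \<Longrightarrow> st_sandwich \<gamma> \<delta> g m \<in> p"
      using exists_st_sandwich_isolating_snd[OF p _ g(2)] g(1) J_sub by blast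
    obtain r where r: "st_sandwich \<alpha> \<beta> f monom_one * r * st_sandwich \<gamma> \<delta> g monom_one \<notin> p"
      using prime_ideal_in_obtain_mult_not_mem[OF P f_one g_one] .
    define F where "F = st_mult (st_sandwich \<alpha> \<beta> f) (st_monom monom_one r)"
    define G where "G = st_sandwich \<gamma> \<delta> g"
    have "st_sandwich \<alpha> \<beta> f \<in> I" by (rule st_sandwich_mem_ideal[OF I f(1) ab])
    then have "F \<in> I" and F_coeff: "\<And>m. F m = st_sandwich \<alpha> \<beta> f m * r"
      unfolding F_def using st_monom_in_Sn_tensor[OF valid_monom_one] I_sub
      by (auto intro: I_mult st_mult_st_monom_one_right)
    have "G \<in> J" unfolding G_def by (rule st_sandwich_mem_ideal[OF J g(1) gd])
    have "st_mult F G monom_one \<in> p"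
      using IJ \<open>F \<in> I\<close> \<open>G \<in> J\<close> unfolding mem_Sn_tensor_ideal by blast
    moreover have "F m \<in> p" if "fst m = (\<lambda>_. 0)" and "m \<noteq> monom_one" for m
      using f_fst[OF that] p F_coeff by (simp add: ideal_in_def)
    moreover have "F \<in> Sn_tensor n" "G \<in> Sn_tensor n" using \<open>F \<in> I\<close> \<open>G \<in> J\<close> I_sub J_sub by blast+
    ultimately have "F monom_one * G monom_one \<in> p"
      using st_mult_coeff_one_mem_iff[where F = F and G = G, OF p] g_snd unfolding G_def by blast
    with r show False by (simp add: F_coeff G_def)
  qed
  show ?thesis unfolding prime_ideal_in_def
  proof (intro conjI allI impI)
    show "ideal_in (Sn_tensor n) st_add st_neg st_zero st_mult (Sn_tensor_ideal n p)"
      by (rule ideal_in_Sn_tensor_ideal[OF p])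
    show "Sn_tensor_ideal n p \<noteq> Sn_tensor n"
      using \<open>p \<noteq> UNIV\<close> by (simp add: Sn_tensor_ideal_eq_Sn_tensor_iff)
  qed (use prime in blast)
qed

lemma prime_ideal_in_of_Sn_tensor_ideal:
  fixes p :: "'a::ring_1 set"
  assumes p: "ring_ideal p"
    and P: "prime_ideal_in (Sn_tensor n) st_add st_neg st_zero st_mult (Sn_tensor_ideal n p)"
  shows "prime_ideal_in UNIV (+) uminus 0 (*) p"
proof -
  have "p \<noteq> UNIV" using P Sn_tensor_ideal_eq_Sn_tensor_iff by (auto simp: prime_ideal_in_def)
  moreover have "I \<subseteq> p \<or> J \<subseteq> p"
    if I: "ring_ideal I" and J: "ring_ideal J" and IJ: "\<forall>a\<in>I. \<forall>b\<in>J. a * b \<in> p" for I J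
  proof -
    have "Sn_tensor_ideal n I \<subseteq> Sn_tensor_ideal n p \<or> Sn_tensor_ideal n J \<subseteq> Sn_tensor_ideal n p"
      using P ideal_in_Sn_tensor_ideal[OF I] ideal_in_Sn_tensor_ideal[OF J]
        st_mult_in_Sn_tensor_ideal[OF p IJ]
      unfolding prime_ideal_in_def by blast
    moreover have "0 \<in> I" "0 \<in> J" "0 \<in> p" using I J p by (simp_all add: ideal_in_def)
    ultimately show ?thesis using Sn_tensor_ideal_subsetD by blast
  qed
  ultimately show ?thesis using p unfolding prime_ideal_in_def by blast
qed

lemma prime_ideal_in_iff_Sn_tensor_ideal:
  fixes p :: "'a::ring_1 set"
  assumes "ring_ideal p"
  shows "prime_ideal_in UNIV (+) uminus 0 (*) p
    \<longleftrightarrow> prime_ideal_in (Sn_tensor n) st_add st_neg st_zero st_mult (Sn_tensor_ideal n p)"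
  using assms prime_ideal_in_Sn_tensor_ideal prime_ideal_in_of_Sn_tensor_ideal by blast

theorem proposition4p3:
  fixes sc :: "'k::field \<Rightarrow> 'a::ring_1 \<Rightarrow> 'a" and n :: nat
  assumes "K_algebra sc" and "n \<ge> 1"
  shows "(prime_ring_in (Sn_tensor n) st_add st_neg st_zero (st_mult :: (monom \<Rightarrow> 'a) \<Rightarrow> _)
            \<longleftrightarrow> prime_ring_in (UNIV :: 'a set) (+) uminus 0 (*))
       \<and> (\<forall>p :: 'a set. ideal_in UNIV (+) uminus 0 (*) p \<longrightarrow>
            (prime_ideal_in UNIV (+) uminus 0 (*) p \<longleftrightarrow>
             prime_ideal_in (Sn_tensor n) st_add st_neg st_zero st_mult (Sn_tensor_ideal n p)))"
proof -
  have "ring_ideal {0 :: 'a}" by (simp add: ideal_in_def)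
  then have "prime_ring_in (Sn_tensor n) st_add st_neg st_zero (st_mult :: (monom \<Rightarrow> 'a) \<Rightarrow> _)
      \<longleftrightarrow> prime_ring_in (UNIV :: 'a set) (+) uminus 0 (*)"
    unfolding prime_ring_in_def Sn_tensor_ideal_zero[of n, symmetric]
    by (rule prime_ideal_in_iff_Sn_tensor_ideal[symmetric])
  then show ?thesis using prime_ideal_in_iff_Sn_tensor_ideal by blast
qed

end
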